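(* Let $n\ge 3$, let $C_n$ be the cycle on $n$ vertices, and let $v\in V(C_n)$. Then $$TDV(v)=\begin{cases}2 & \text{if } n\equiv 0 \pmod 4,\\ \left\lfloor \frac n2\right\rfloor+1 & \text{if } n\equiv 1,3 \pmod 4,\\ \frac n2\cdot\frac{n+2}{4} & \text{if } n\equiv 2 \pmod 4.\end{cases}$$
   Context: A set $D \subseteq V(G)$ is a total dominating set of a graph $G$ if every vertex of $G$ has a neighbor in $D$. $\gamma_t(G)$ is the minimum cardinality of a total dominating set; a minimum one is a $\gamma_t(G)$-set. $TDV(v)$ is the number of $\gamma_t(C_n)$-sets containing $v$. *)

theory Defs
  imports Main
begin

definition is_tds :: "'a set \<Rightarrow> ('a \<Rightarrow> 'a \<Rightarrow> bool) \<Rightarrow> 'a set \<Rightarrow> bool" where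
  "is_tds V E D \<longleftrightarrow> D \<subseteq> V \<and> (\<forall>x\<in>V. \<exists>y\<in>D. E x y)"

definition gamma_t :: "'a set \<Rightarrow> ('a \<Rightarrow> 'a \<Rightarrow> bool) \<Rightarrow> nat" where
  "gamma_t V E = (LEAST k. \<exists>D. is_tds V E D \<and> card D = k)"

definition gamma_t_sets :: "'a set \<Rightarrow> ('a \<Rightarrow> 'a \<Rightarrow> bool) \<Rightarrow> 'a set set" where
  "gamma_t_sets V E = {D. is_tds V E D \<and> card D = gamma_t V E}"

definition cycle_adj :: "nat \<Rightarrow> nat \<Rightarrow> nat \<Rightarrow> bool" where
  "cycle_adj n i j \<longleftrightarrow> i < n \<and> j < n \<and> (j = (i + 1) mod n \<or> i = (j + 1) mod n)"

definition TDV :: "nat \<Rightarrow> nat \<Rightarrow> nat" where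
  "TDV n v = card {D \<in> gamma_t_sets {0..<n} (cycle_adj n). v \<in> D}"

end

theory Submission
  imports Defs "HOL-Number_Theory.Cong"
begin

(*
  Vertex y + 1 of the cycle is dominated exactly by its neighbours y and y + 2, so the total
  dominating sets of C_n are the sets meeting every pair {i, i + 2} of Z/n. For odd n,
  multiplication by 2 is a bijection of Z/n turning these into the vertex covers of C_n; for
  n = 2m, the even and the odd vertices of such a set form two independent vertex covers of C_m.

  Every vertex of C_m lies on two edges and every edge meets a cover T, so m + e = 2 |T|, where e
  counts the edges inside T. Hence |T| >= ceil(m/2), and a minimum cover has e = m mod 2: it
  alternates along the cycle, starting right after its unique inner edge when m is odd. So the
  minimum covers are the m rotations of {0, 2, 4, ...} for odd m and the two parity classes for
  even m; a fixed vertex lies in ceil(m/2) resp. one of them, and counting gives the three cases.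
*)

section \<open>Arithmetic modulo m\<close>

lemma card_filter_image:
  assumes "inj_on f A"
  shows "card {y \<in> f ` A. P y} = card {x \<in> A. P (f x)}"
proof -
  have "{y \<in> f ` A. P y} = f ` {x \<in> A. P (f x)}" by auto
  then show ?thesis using assms by (simp add: card_image inj_on_subset)
qed

lemma all_less_reindex:
  assumes "f ` {..<n} = {..<(n::nat)}"
  shows "(\<forall>x<n. P x) \<longleftrightarrow> (\<forall>y<n. P (f y))"
  by (metis assms imageE imageI lessThan_iff)

lemma mod_add_left_cancel_less:
  fixes c t t' m :: nat
  assumes "t < m" "t' < m"
  shows "(c + t) mod m = (c + t') mod m \<longleftrightarrow> t = t'"
proof
  assume "(c + t) mod m = (c + t') mod m"
  then have "[t = t'] (mod m)" using cong_add_lcancel_nat unfolding cong_def by blast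
  then show "t = t'" using assms by (rule cong_less_modulus_unique_nat)
qed simp

lemma mod_add_right_cancel_less:
  fixes c c' t m :: nat
  assumes "c < m" "c' < m"
  shows "(c + t) mod m = (c' + t) mod m \<longleftrightarrow> c = c'"
  using mod_add_left_cancel_less[OF assms, of t] by (metis add.commute)

lemma bij_betw_mod_add: "bij_betw (\<lambda>t. (k + t) mod m) {..<m} {..<(m::nat)}"
proof (cases "m = 0")
  case False
  show ?thesis
    unfolding bij_betw_def
  proof
    show inj: "inj_on (\<lambda>t. (k + t) mod m) {..<m}"
      by (auto intro: inj_onI simp: mod_add_left_cancel_less)
    show "(\<lambda>t. (k + t) mod m) ` {..<m} = {..<m}"
      using False by (intro endo_inj_surj inj) auto
  qed
qed simp

lemma mod_addE:
  fixes x m k :: nat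
  assumes "x < m"
  obtains t where "t < m" "x = (k + t) mod m"
proof -
  have "x \<in> (\<lambda>t. (k + t) mod m) ` {..<m}"
    using bij_betw_mod_add[of k m] assms by (simp add: bij_betw_def)
  then show ?thesis using that by blast
qed

lemma bij_betw_mod_mult:
  fixes c n :: nat
  assumes "coprime c n" "0 < n"
  shows "bij_betw (\<lambda>i. c * i mod n) {..<n} {..<n}"
  unfolding bij_betw_def
proof
  show inj: "inj_on (\<lambda>i. c * i mod n) {..<n}"
  proof (rule inj_onI)
    fix i j assume ij: "i \<in> {..<n}" "j \<in> {..<n}" "c * i mod n = c * j mod n"
    then have "[i = j] (mod n)" using cong_mult_lcancel_nat[OF assms(1)] by (simp add: cong_def)
    then show "i = j" using cong_less_modulus_unique_nat ij by auto
  qed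
  show "(\<lambda>i. c * i mod n) ` {..<n} = {..<n}"
    using assms by (intro endo_inj_surj inj) auto
qed

lemma card_even_less: "card {t::nat. t < m \<and> even t} = (m + 1) div 2"
proof -
  have "{t::nat. t < m \<and> even t} = (*) 2 ` {..<(m + 1) div 2}"
  proof (intro set_eqI iffI)
    fix t assume "t \<in> {t. t < m \<and> even t}"
    then have "t = 2 * (t div 2)" "t div 2 < (m + 1) div 2" by auto
    then show "t \<in> (*) 2 ` {..<(m + 1) div 2}" by (metis image_eqI lessThan_iff)
  qed auto
  then show ?thesis by (simp add: card_image inj_on_def)
qed

section \<open>Vertex covers of the cycle\<close>

(* T meets every pair {i, i + s} of Z/n: for s = 1 these are the vertex covers of C_n, for
   s = 2 the total dominating sets of C_n (is_tds_cycle_iff). *)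
definition cyclic_cover :: "nat \<Rightarrow> nat \<Rightarrow> nat set \<Rightarrow> bool" where
  "cyclic_cover n s T \<longleftrightarrow> T \<subseteq> {..<n} \<and> (\<forall>i<n. i \<in> T \<or> (i + s) mod n \<in> T)"

definition inner_edges :: "nat \<Rightarrow> nat set \<Rightarrow> nat set" where
  "inner_edges m T = {i. i < m \<and> i \<in> T \<and> (i + 1) mod m \<in> T}"

lemma card_inner_edges:
  assumes cover: "cyclic_cover m 1 T"
  shows "m + card (inner_edges m T) = 2 * card T"
proof -
  have T: "T \<subseteq> {..<m}" using cover unfolding cyclic_cover_def by simp
  have shift: "(\<Sum>i<m. of_bool ((1 + i) mod m \<in> T)) = (\<Sum>i<m. of_bool (i \<in> T) :: nat)"
    using sum.reindex_bij_betw[OF bij_betw_mod_add] .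
  have "2 * card T = (\<Sum>i<m. of_bool (i \<in> T) + of_bool ((i + 1) mod m \<in> T) :: nat)"
    using T shift by (simp add: sum.distrib sum_of_bool_eq Int_absorb1 Int_absorb2)
  also have "\<dots> = (\<Sum>i<m. 1 + of_bool (i \<in> inner_edges m T))"
    using cover unfolding cyclic_cover_def inner_edges_def by (intro sum.cong) auto
  also have "\<dots> = m + card (inner_edges m T)"
    unfolding sum.distrib by (simp add: sum_of_bool_eq inner_edges_def Int_def)
  finally show ?thesis by linarith
qed

lemma card_cyclic_cover_ge: "cyclic_cover m 1 T \<Longrightarrow> (m + 1) div 2 \<le> card T"
  using card_inner_edges[of m T] by linarith

definition alternating :: "nat \<Rightarrow> nat \<Rightarrow> nat set" where
  "alternating m k = (\<lambda>t. (k + t) mod m) ` {t. t < m \<and> even t}"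

lemma mem_alternating_iff:
  assumes "t < m"
  shows "(k + t) mod m \<in> alternating m k \<longleftrightarrow> even t"
proof
  assume "(k + t) mod m \<in> alternating m k"
  then obtain t' where "t' < m" "even t'" "(k + t) mod m = (k + t') mod m"
    unfolding alternating_def by auto
  then show "even t" using assms mod_add_left_cancel_less by metis
next
  assume "even t"
  then show "(k + t) mod m \<in> alternating m k" using assms unfolding alternating_def by blast
qed

lemma alternating_subset: "alternating m k \<subseteq> {..<m}"
  unfolding alternating_def by auto

lemma card_alternating: "card (alternating m k) = (m + 1) div 2"
proof -
  have "inj_on (\<lambda>t. (k + t) mod m) {t. t < m \<and> even t}"
    using bij_betw_imp_inj_on[OF bij_betw_mod_add] by (rule inj_on_subset) auto
  then show ?thesis unfolding alternating_def by (simp add: card_image card_even_less)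
qed

lemma eq_alternating_iff:
  assumes T: "T \<subseteq> {..<m}"
  shows "T = alternating m k \<longleftrightarrow> (\<forall>t<m. (k + t) mod m \<in> T \<longleftrightarrow> even t)"
proof
  assume "T = alternating m k"
  then show "\<forall>t<m. (k + t) mod m \<in> T \<longleftrightarrow> even t" using mem_alternating_iff by simp
next
  assume parity: "\<forall>t<m. (k + t) mod m \<in> T \<longleftrightarrow> even t"
  show "T = alternating m k"
  proof (rule set_eqI)
    fix x
    show "x \<in> T \<longleftrightarrow> x \<in> alternating m k"
    proof (cases "x < m")
      case True
      then obtain t where "t < m" "x = (k + t) mod m" by (rule mod_addE)
      then show ?thesis using parity mem_alternating_iff by simp
    next
      case False
      then show ?thesis using T alternating_subset by blast
    qed
  qed
qed

lemma cyclic_cover_alternating: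
  assumes "0 < m"
  shows "cyclic_cover m 1 (alternating m k)"
  unfolding cyclic_cover_def
proof (intro conjI allI impI alternating_subset)
  fix x assume "x < m"
  then obtain t where t: "t < m" "x = (k + t) mod m" by (rule mod_addE)
  have next_pos: "(x + 1) mod m = (k + Suc t) mod m" using t by (simp add: mod_Suc_eq)
  show "x \<in> alternating m k \<or> (x + 1) mod m \<in> alternating m k"
  proof (cases "Suc t < m")
    case True
    then show ?thesis
      using mem_alternating_iff[OF t(1), of k] mem_alternating_iff[OF True, of k] t(2) next_pos
      by auto
  next
    case False
    then have "Suc t = m" using t(1) by simp
    then have "(x + 1) mod m = (k + 0) mod m" using next_pos by simp
    then show ?thesis using mem_alternating_iff[of 0 m k] assms by simp
  qed
qed

lemma cyclic_cover_eq_alternating: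
  assumes cover: "cyclic_cover m 1 T" and k: "k \<in> T"
    and no_inner: "\<And>t. Suc t < m \<Longrightarrow> (k + t) mod m \<notin> inner_edges m T"
  shows "T = alternating m k"
proof -
  have T: "T \<subseteq> {..<m}" using cover unfolding cyclic_cover_def by simp
  have "(k + t) mod m \<in> T \<longleftrightarrow> even t" if "t < m" for t
    using that
  proof (induction t)
    case 0
    then show ?case using k T by auto
  next
    case (Suc t)
    define x where "x = (k + t) mod m"
    have x: "x < m" "(x + 1) mod m = (k + Suc t) mod m"
      using Suc.prems unfolding x_def by (auto simp: mod_Suc_eq)
    have "x \<in> T \<or> (x + 1) mod m \<in> T" using cover x(1) unfolding cyclic_cover_def by blast
    moreover have "\<not> (x \<in> T \<and> (x + 1) mod m \<in> T)"
      using no_inner[OF Suc.prems] x(1) unfolding x_def inner_edges_def by blast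
    ultimately show ?case using Suc x unfolding x_def by auto
  qed
  then show ?thesis using eq_alternating_iff[OF T] by blast
qed

definition min_cycle_covers :: "nat \<Rightarrow> nat set set" where
  "min_cycle_covers m = {T. cyclic_cover m 1 T \<and> card T = (m + 1) div 2}"

lemma alternating_in_min_cycle_covers: "0 < m \<Longrightarrow> alternating m k \<in> min_cycle_covers m"
  unfolding min_cycle_covers_def using cyclic_cover_alternating card_alternating by simp

lemma card_inner_edges_min_cycle_cover:
  "T \<in> min_cycle_covers m \<Longrightarrow> card (inner_edges m T) = m mod 2"
  unfolding min_cycle_covers_def using card_inner_edges[of m T] by auto presburger

lemma min_cycle_covers_odd:
  assumes "odd m"
  shows "min_cycle_covers m = alternating m ` {..<m}"
proof
  show "alternating m ` {..<m} \<subseteq> min_cycle_covers m"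
    using assms alternating_in_min_cycle_covers by (auto intro: odd_pos)
next
  show "min_cycle_covers m \<subseteq> alternating m ` {..<m}"
  proof
    fix T assume T: "T \<in> min_cycle_covers m"
    then have cover: "cyclic_cover m 1 T" unfolding min_cycle_covers_def by simp
    have "card (inner_edges m T) = 1"
      using card_inner_edges_min_cycle_cover[OF T] assms by (simp add: odd_iff_mod_2_eq_one)
    then obtain i where i: "inner_edges m T = {i}" by (rule card_1_singletonE)
    then have "i < m" "(i + 1) mod m \<in> T" unfolding inner_edges_def by auto
    define k where "k = (i + 1) mod m"
    have "(k + t) mod m \<notin> inner_edges m T" if "Suc t < m" for t
    proof -
      have "(k + t) mod m = (i + Suc t) mod m" unfolding k_def by (simp add: mod_add_left_eq)
      also have "\<dots> \<noteq> (i + 0) mod m" using that mod_add_left_cancel_less by blast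
      finally show ?thesis using i \<open>i < m\<close> by simp
    qed
    then have "T = alternating m k"
      using cyclic_cover_eq_alternating[OF cover] \<open>(i + 1) mod m \<in> T\<close> unfolding k_def by blast
    moreover have "k < m" using \<open>i < m\<close> unfolding k_def by simp
    ultimately show "T \<in> alternating m ` {..<m}" by blast
  qed
qed

lemma inner_edges_alternating_odd:
  assumes "odd m" "k < m"
  shows "inner_edges m (alternating m k) = {(k + (m - 1)) mod m}"
proof -
  have m: "0 < m" using assms by simp
  have "(k + (m - 1)) mod m \<in> alternating m k"
    using mem_alternating_iff[of "m - 1" m k] assms by simp
  moreover have "((k + (m - 1)) mod m + 1) mod m = (k + 0) mod m"
    using m by (simp add: mod_Suc_eq)
  moreover have "(k + 0) mod m \<in> alternating m k" using mem_alternating_iff m by blast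
  ultimately have "(k + (m - 1)) mod m \<in> inner_edges m (alternating m k)"
    unfolding inner_edges_def using m by simp
  moreover have "card (inner_edges m (alternating m k)) = 1"
    using card_inner_edges_min_cycle_cover[OF alternating_in_min_cycle_covers[OF m]] assms
    by presburger
  ultimately show ?thesis by (metis card_1_singletonE singletonD)
qed

lemma inj_on_alternating_odd:
  assumes "odd m"
  shows "inj_on (alternating m) {..<m}"
proof (rule inj_onI)
  fix k k' assume k: "k \<in> {..<m}" "k' \<in> {..<m}" and eq: "alternating m k = alternating m k'"
  then have "(k + (m - 1)) mod m = (k' + (m - 1)) mod m"
    using inner_edges_alternating_odd[OF assms] by (metis lessThan_iff singleton_inject)
  then show "k = k'" using k mod_add_right_cancel_less by blast
qed

lemma card_min_cycle_covers_odd: "odd m \<Longrightarrow> card (min_cycle_covers m) = m"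
  using min_cycle_covers_odd inj_on_alternating_odd by (simp add: card_image)

lemma card_min_cycle_covers_mem_odd:
  assumes "odd m" "j < m"
  shows "card {T \<in> min_cycle_covers m. j \<in> T} = (m + 1) div 2"
proof -
  \<comment> \<open>\<open>r t\<close> is the start of the alternating set that reaches \<open>j\<close> after \<open>t\<close> steps\<close>
  define r where "r t = (j + (m - t)) mod m" for t
  have r_add: "(r t + t) mod m = j" if "t \<le> m" for t
  proof -
    have "(r t + t) mod m = (j + m) mod m"
      unfolding r_def using that by (simp add: mod_add_left_eq)
    then show ?thesis using assms by simp
  qed
  have "inj_on r {..<m}"
  proof (rule inj_onI)
    fix t t' assume "t \<in> {..<m}" "t' \<in> {..<m}" "r t = r t'"
    then have "(r t + t) mod m = (r t + t') mod m"
      using r_add[of t] r_add[of t'] by (simp add: less_imp_le)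
    then show "t = t'" using \<open>t \<in> {..<m}\<close> \<open>t' \<in> {..<m}\<close> mod_add_left_cancel_less by blast
  qed
  then have "bij_betw r {..<m} {..<m}"
    unfolding bij_betw_def using assms by (intro conjI endo_inj_surj) (auto simp: r_def)
  moreover have "j \<in> alternating m (r t) \<longleftrightarrow> even t" if "t < m" for t
    using mem_alternating_iff[OF that, of "r t"] r_add that by simp
  ultimately have "bij_betw r {t \<in> {..<m}. even t} {k \<in> {..<m}. j \<in> alternating m k}"
    by (rule bij_betw_Collect) simp
  then have "card {k \<in> {..<m}. j \<in> alternating m k} = (m + 1) div 2"
    using card_even_less by (simp add: bij_betw_same_card[symmetric])
  then show ?thesis
    using card_filter_image[OF inj_on_alternating_odd[OF assms(1)]] min_cycle_covers_odd[OF assms(1)]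
    by simp
qed

lemma mem_alternating_even:
  assumes "even m" "j < m"
  shows "j \<in> alternating m 0 \<longleftrightarrow> even j" and "j \<in> alternating m 1 \<longleftrightarrow> odd j"
proof -
  show "j \<in> alternating m 0 \<longleftrightarrow> even j" using mem_alternating_iff[OF assms(2), of 0] assms by simp
  show "j \<in> alternating m 1 \<longleftrightarrow> odd j"
  proof (cases j)
    case 0
    have "(1 + (m - 1)) mod m = 0" using assms by simp
    then show ?thesis using mem_alternating_iff[of "m - 1" m 1] assms 0 by simp
  next
    case (Suc i)
    then show ?thesis using mem_alternating_iff[of i m 1] assms by simp
  qed
qed

lemma min_cycle_covers_even:
  assumes "even m" "0 < m"
  shows "min_cycle_covers m = {alternating m 0, alternating m 1}"
proof
  show "{alternating m 0, alternating m 1} \<subseteq> min_cycle_covers m"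
    using alternating_in_min_cycle_covers assms by simp
next
  show "min_cycle_covers m \<subseteq> {alternating m 0, alternating m 1}"
  proof
    fix T assume T: "T \<in> min_cycle_covers m"
    then have cover: "cyclic_cover m 1 T" unfolding min_cycle_covers_def by simp
    have "finite (inner_edges m T)" unfolding inner_edges_def by simp
    moreover have "card (inner_edges m T) = 0"
      using card_inner_edges_min_cycle_cover[OF T] assms(1) by simp
    ultimately have no_inner: "inner_edges m T = {}" by simp
    have "0 \<in> T \<or> (0 + 1) mod m \<in> T"
      using cover assms(2) unfolding cyclic_cover_def by blast
    moreover have "(0 + 1) mod m = 1" using assms by (cases "m = 1") auto
    ultimately have "T = alternating m 0 \<or> T = alternating m 1"
      using cyclic_cover_eq_alternating[OF cover] no_inner by auto
    then show "T \<in> {alternating m 0, alternating m 1}" by simp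
  qed
qed

lemma card_min_cycle_covers_even:
  assumes "even m" "0 < m"
  shows "card (min_cycle_covers m) = 2"
proof -
  have "alternating m 0 \<noteq> alternating m 1" using mem_alternating_even[of m 0] assms by auto
  then show ?thesis using min_cycle_covers_even[OF assms] by simp
qed

lemma card_min_cycle_covers_mem_even:
  assumes "even m" "j < m"
  shows "card {T \<in> min_cycle_covers m. j \<in> T} = 1"
proof -
  define k :: nat where "k = (if even j then 0 else 1)"
  have "j \<in> alternating m k" "j \<notin> alternating m (1 - k)"
    using mem_alternating_even[OF assms] unfolding k_def by auto
  moreover have "min_cycle_covers m = {alternating m k, alternating m (1 - k)}"
    using min_cycle_covers_even[OF assms(1)] assms(2) unfolding k_def by auto
  ultimately have "{T \<in> min_cycle_covers m. j \<in> T} = {alternating m k}" by blast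
  then show ?thesis by simp
qed

section \<open>Total domination in the cycle\<close>

lemma gamma_t_sets_eq_image:
  fixes \<Phi> :: "'b \<Rightarrow> 'a set" and w :: "'b \<Rightarrow> nat"
  assumes tds: "\<And>D. is_tds V E D \<longleftrightarrow> D \<in> \<Phi> ` C"
    and card: "\<And>x. x \<in> C \<Longrightarrow> card (\<Phi> x) = w x"
    and x0: "x0 \<in> C" and minimal: "\<And>x. x \<in> C \<Longrightarrow> w x0 \<le> w x"
  shows "gamma_t_sets V E = \<Phi> ` {x \<in> C. w x = w x0}"
proof -
  have "gamma_t V E = w x0"
    unfolding gamma_t_def
  proof (rule Least_equality)
    show "\<exists>D. is_tds V E D \<and> card D = w x0" using tds card x0 by blast
    show "w x0 \<le> k" if "\<exists>D. is_tds V E D \<and> card D = k" for k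
      using that tds card minimal by auto
  qed
  then show ?thesis unfolding gamma_t_sets_def using tds card by auto
qed

lemma is_tds_cycle_iff: "is_tds {0..<n} (cycle_adj n) D \<longleftrightarrow> cyclic_cover n 2 D"
proof -
  \<comment> \<open>the neighbours of vertex \<open>y + 1\<close> are \<open>y\<close> and \<open>y + 2\<close>\<close>
  have dominated: "(\<exists>z\<in>D. cycle_adj n ((1 + y) mod n) z) \<longleftrightarrow> y \<in> D \<or> (y + 2) mod n \<in> D"
    if y: "y < n" and D: "D \<subseteq> {..<n}" for y
  proof -
    have "((1 + y) mod n + 1) mod n = (y + 2) mod n" by (simp add: mod_Suc_eq)
    moreover have "(1 + y) mod n = (z + 1) mod n \<longleftrightarrow> z = y" if "z < n" for z
      using mod_add_left_cancel_less[OF that y, of 1] by (metis add.commute)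
    ultimately have "cycle_adj n ((1 + y) mod n) z \<longleftrightarrow> z < n \<and> (z = (y + 2) mod n \<or> z = y)" for z
      unfolding cycle_adj_def using y by auto
    then show ?thesis using D y by auto
  qed
  show ?thesis
  proof (cases "D \<subseteq> {..<n}")
    case True
    have "(\<forall>x<n. \<exists>z\<in>D. cycle_adj n x z) \<longleftrightarrow> (\<forall>y<n. y \<in> D \<or> (y + 2) mod n \<in> D)"
      using all_less_reindex[of "\<lambda>y. (1 + y) mod n" n "\<lambda>x. \<exists>z\<in>D. cycle_adj n x z"]
        bij_betw_mod_add[of 1 n] dominated[OF _ True]
      by (simp add: bij_betw_def)
    then show ?thesis unfolding is_tds_def cyclic_cover_def atLeast0LessThan using True by blast
  qed (simp add: is_tds_def cyclic_cover_def atLeast0LessThan)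
qed

lemma cyclic_cover_mod_mult_image:
  fixes c n s :: nat
  assumes "coprime c n" "0 < n" and T: "T \<subseteq> {..<n}"
  shows "cyclic_cover n (c * s) ((\<lambda>i. c * i mod n) ` T) \<longleftrightarrow> cyclic_cover n s T"
proof -
  let ?f = "\<lambda>i. c * i mod n"
  have bij: "bij_betw ?f {..<n} {..<n}" using bij_betw_mod_mult assms(1,2) .
  have mem: "?f i \<in> ?f ` T \<longleftrightarrow> i \<in> T" if "i < n" for i
    using inj_on_image_mem_iff[OF bij_betw_imp_inj_on[OF bij] _ T] that by simp
  have step: "(?f i + c * s) mod n = ?f ((i + s) mod n)" for i
    by (simp add: mod_add_left_eq mod_mult_right_eq distrib_left)
  have "(\<forall>y<n. y \<in> ?f ` T \<or> (y + c * s) mod n \<in> ?f ` T) \<longleftrightarrow>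
        (\<forall>i<n. ?f i \<in> ?f ` T \<or> (?f i + c * s) mod n \<in> ?f ` T)"
    using bij unfolding bij_betw_def by (rule conjunct2[THEN all_less_reindex])
  also have "\<dots> \<longleftrightarrow> (\<forall>i<n. i \<in> T \<or> (i + s) mod n \<in> T)"
    using mem step assms(2) by simp
  finally show ?thesis unfolding cyclic_cover_def using T assms(2) by auto
qed

lemma gamma_t_sets_cycle_odd:
  assumes "odd n"
  shows "gamma_t_sets {0..<n} (cycle_adj n) = image (\<lambda>i. 2 * i mod n) ` min_cycle_covers n"
proof -
  let ?f = "\<lambda>i. 2 * i mod n"
  have n: "0 < n" "coprime 2 n" using assms by (auto simp: odd_pos)
  have bij: "bij_betw ?f {..<n} {..<n}" using bij_betw_mod_mult n(2,1) .
  have cover_sub: "T \<subseteq> {..<n}" if "cyclic_cover n 1 T" for T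
    using that unfolding cyclic_cover_def by simp
  have card: "card (?f ` T) = card T" if "cyclic_cover n 1 T" for T
    using bij_betw_imp_inj_on[OF bij] cover_sub[OF that] by (simp add: card_image inj_on_subset)
  have tds: "is_tds {0..<n} (cycle_adj n) D \<longleftrightarrow> D \<in> image ?f ` {T. cyclic_cover n 1 T}" for D
  proof
    assume "is_tds {0..<n} (cycle_adj n) D"
    then have cover: "cyclic_cover n (2 * 1) D" by (simp add: is_tds_cycle_iff)
    then have "D \<subseteq> ?f ` {..<n}" using bij unfolding cyclic_cover_def bij_betw_def by simp
    then obtain T where T: "T \<subseteq> {..<n}" "D = ?f ` T" by (auto simp: subset_image_iff)
    then show "D \<in> image ?f ` {T. cyclic_cover n 1 T}"
      using cover cyclic_cover_mod_mult_image[OF n(2,1) T(1)] by blast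
  next
    assume "D \<in> image ?f ` {T. cyclic_cover n 1 T}"
    then obtain T where "cyclic_cover n 1 T" "D = ?f ` T" by blast
    then show "is_tds {0..<n} (cycle_adj n) D"
      using cyclic_cover_mod_mult_image[OF n(2,1) cover_sub, of T 1] by (simp add: is_tds_cycle_iff)
  qed
  have "gamma_t_sets {0..<n} (cycle_adj n) =
        image ?f ` {T \<in> {T. cyclic_cover n 1 T}. card T = card (alternating n 0)}"
    by (rule gamma_t_sets_eq_image[OF tds card])
      (use cyclic_cover_alternating[OF n(1)] card_cyclic_cover_ge card_alternating in auto)
  then show ?thesis by (simp add: min_cycle_covers_def card_alternating)
qed

lemma TDV_cycle_odd:
  assumes "odd n" "v < n"
  shows "TDV n v = (n + 1) div 2"
proof -
  let ?f = "\<lambda>i. 2 * i mod n"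
  have "bij_betw ?f {..<n} {..<n}" using bij_betw_mod_mult assms by (auto simp: odd_pos)
  then have inj: "inj_on ?f {..<n}" and "v \<in> ?f ` {..<n}" using assms(2) by (auto simp: bij_betw_def)
  then obtain u where u: "u < n" "v = ?f u" by blast
  have sub: "min_cycle_covers n \<subseteq> Pow {..<n}"
    unfolding min_cycle_covers_def cyclic_cover_def by auto
  have "TDV n v = card {T \<in> min_cycle_covers n. v \<in> ?f ` T}"
    unfolding TDV_def gamma_t_sets_cycle_odd[OF assms(1)]
    using inj_on_subset[OF inj_on_image_Pow[OF inj] sub] by (rule card_filter_image)
  also have "{T \<in> min_cycle_covers n. v \<in> ?f ` T} = {T \<in> min_cycle_covers n. u \<in> T}"
  proof (rule Collect_cong)
    fix T
    have "T \<in> min_cycle_covers n \<Longrightarrow> T \<subseteq> {..<n}" using sub by blast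
    then show "T \<in> min_cycle_covers n \<and> v \<in> ?f ` T \<longleftrightarrow> T \<in> min_cycle_covers n \<and> u \<in> T"
      using inj_on_image_mem_iff[OF inj, of u T] u by auto
  qed
  also have "card \<dots> = (n + 1) div 2" using card_min_cycle_covers_mem_odd assms(1) u(1) .
  finally show ?thesis .
qed

lemma all_less_double_iff: "(\<forall>y<2 * (m::nat). P y) \<longleftrightarrow> (\<forall>i<m. P (2 * i) \<and> P (2 * i + 1))"
proof
  assume all: "\<forall>i<m. P (2 * i) \<and> P (2 * i + 1)"
  show "\<forall>y<2 * m. P y"
  proof (intro allI impI)
    fix y :: nat assume "y < 2 * m"
    then have "y div 2 < m" "y = 2 * (y div 2) \<or> y = 2 * (y div 2) + 1" by presburger+
    then show "P y" using all by metis
  qed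
qed auto

definition interleave :: "nat set \<Rightarrow> nat set \<Rightarrow> nat set" where
  "interleave A B = (\<lambda>i. 2 * i) ` A \<union> (\<lambda>i. 2 * i + 1) ` B"

lemma mem_interleave_iff:
  "v \<in> interleave A B \<longleftrightarrow> (if even v then v div 2 \<in> A else v div 2 \<in> B)"
proof (cases "even v")
  case True
  then obtain i where "v = 2 * i" by blast
  then show ?thesis unfolding interleave_def by auto presburger
next
  case False
  then obtain i where "v = 2 * i + 1" using oddE by blast
  then show ?thesis unfolding interleave_def by auto presburger
qed

lemma interleave_inj:
  assumes "interleave A B = interleave A' B'"
  shows "A = A' \<and> B = B'"
proof -
  have "i \<in> A \<longleftrightarrow> i \<in> A'" "i \<in> B \<longleftrightarrow> i \<in> B'" for i
    using assms mem_interleave_iff[of "2 * i"] mem_interleave_iff[of "2 * i + 1"] by (simp, metis)+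
  then show ?thesis by blast
qed

lemma card_interleave:
  assumes "finite A" "finite B"
  shows "card (interleave A B) = card A + card B"
proof -
  have "(\<lambda>i. 2 * i) ` A \<inter> (\<lambda>i. 2 * i + 1) ` B = {}" by (auto dest: arg_cong[where f = even])
  then show ?thesis
    unfolding interleave_def using assms by (simp add: card_Un_disjoint card_image inj_on_def)
qed
lemma interleave_subset_iff:
  "interleave A B \<subseteq> {..<2 * m} \<longleftrightarrow> A \<subseteq> {..<m} \<and> B \<subseteq> {..<m}"
  unfolding interleave_def by auto

lemma subset_interleave_image:
  assumes "D \<subseteq> {..<2 * m}"
  obtains A B where "A \<subseteq> {..<m}" "B \<subseteq> {..<m}" "D = interleave A B"
proof
  show "D = interleave {i. 2 * i \<in> D} {i. 2 * i + 1 \<in> D}"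
  proof (rule set_eqI)
    fix x
    show "x \<in> D \<longleftrightarrow> x \<in> interleave {i. 2 * i \<in> D} {i. 2 * i + 1 \<in> D}"
      by (cases "even x") (simp_all add: mem_interleave_iff even_two_times_div_two odd_two_times_div_two_succ)
  qed
  show "{i. 2 * i \<in> D} \<subseteq> {..<m}" "{i. 2 * i + 1 \<in> D} \<subseteq> {..<m}"
    using assms by auto
qed

lemma cyclic_cover_interleave:
  "cyclic_cover (2 * m) (2 * s) (interleave A B) \<longleftrightarrow> cyclic_cover m s A \<and> cyclic_cover m s B"
proof -
  let ?I = "interleave A B"
  have step_even: "(2 * i + 2 * s) mod (2 * m) = 2 * ((i + s) mod m)" for i
  proof -
    have "2 * i + 2 * s = 2 * (i + s)" by simp
    then show ?thesis by (simp only: mod_mult_mult1)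
  qed
  have step_odd: "(2 * i + 1 + 2 * s) mod (2 * m) = 2 * ((i + s) mod m) + 1" for i
  proof -
    have "2 * i + 1 + 2 * s = 2 * (i + s) + 1" by simp
    then show ?thesis by (simp add: mod_mult2_eq)
  qed
  have "(\<forall>y<2 * m. y \<in> ?I \<or> (y + 2 * s) mod (2 * m) \<in> ?I) \<longleftrightarrow>
        (\<forall>i<m. (2 * i \<in> ?I \<or> (2 * i + 2 * s) mod (2 * m) \<in> ?I) \<and>
               (2 * i + 1 \<in> ?I \<or> (2 * i + 1 + 2 * s) mod (2 * m) \<in> ?I))"
    by (rule all_less_double_iff)
  also have "\<dots> \<longleftrightarrow> (\<forall>i<m. (i \<in> A \<or> (i + s) mod m \<in> A) \<and> (i \<in> B \<or> (i + s) mod m \<in> B))"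
    unfolding step_even step_odd mem_interleave_iff by simp
  finally show ?thesis unfolding cyclic_cover_def interleave_subset_iff by blast
qed

lemma gamma_t_sets_cycle_even:
  assumes "0 < m"
  shows "gamma_t_sets {0..<2 * m} (cycle_adj (2 * m)) =
         (\<lambda>(A, B). interleave A B) ` (min_cycle_covers m \<times> min_cycle_covers m)"
proof -
  let ?\<Phi> = "\<lambda>(A, B). interleave A B" and ?w = "\<lambda>(A, B). card A + card B"
  let ?C = "{(A, B). cyclic_cover m 1 A \<and> cyclic_cover m 1 B}"
  have cover_finite: "finite A" if "cyclic_cover m 1 A" for A
    using that unfolding cyclic_cover_def by (meson finite_lessThan finite_subset)
  have tds: "is_tds {0..<2 * m} (cycle_adj (2 * m)) D \<longleftrightarrow> D \<in> ?\<Phi> ` ?C" for D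
  proof
    assume "is_tds {0..<2 * m} (cycle_adj (2 * m)) D"
    then have cover: "cyclic_cover (2 * m) (2 * 1) D" by (simp add: is_tds_cycle_iff)
    then obtain A B where "D = interleave A B"
      using subset_interleave_image unfolding cyclic_cover_def by metis
    then show "D \<in> ?\<Phi> ` ?C" using cover cyclic_cover_interleave by force
  next
    assume "D \<in> ?\<Phi> ` ?C"
    then obtain A B where "cyclic_cover m 1 A" "cyclic_cover m 1 B" "D = interleave A B" by auto
    then show "is_tds {0..<2 * m} (cycle_adj (2 * m)) D"
      using cyclic_cover_interleave[of m 1 A B] by (simp add: is_tds_cycle_iff)
  qed
  have card: "card (?\<Phi> p) = ?w p" if "p \<in> ?C" for p
    using that cover_finite card_interleave by auto
  have x0: "(alternating m 0, alternating m 0) \<in> ?C"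
    using cyclic_cover_alternating[OF assms] by simp
  have "gamma_t_sets {0..<2 * m} (cycle_adj (2 * m)) =
        ?\<Phi> ` {p \<in> ?C. ?w p = ?w (alternating m 0, alternating m 0)}"
    by (rule gamma_t_sets_eq_image[OF tds card x0])
      (use card_cyclic_cover_ge card_alternating in \<open>auto intro!: add_mono\<close>)
  also have "{p \<in> ?C. ?w p = ?w (alternating m 0, alternating m 0)} =
             min_cycle_covers m \<times> min_cycle_covers m"
  proof -
    have "card A + card B = (m + 1) div 2 + (m + 1) div 2 \<longleftrightarrow>
          card A = (m + 1) div 2 \<and> card B = (m + 1) div 2"
      if "cyclic_cover m 1 A" "cyclic_cover m 1 B" for A B
      using card_cyclic_cover_ge[OF that(1)] card_cyclic_cover_ge[OF that(2)] by linarith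
    then show ?thesis by (auto simp: min_cycle_covers_def card_alternating)
  qed
  finally show ?thesis .
qed

lemma TDV_cycle_even:
  assumes "0 < m" "v < 2 * m"
  shows "TDV (2 * m) v = card {T \<in> min_cycle_covers m. v div 2 \<in> T} * card (min_cycle_covers m)"
proof -
  let ?\<Phi> = "\<lambda>(A, B). interleave A B" and ?M = "min_cycle_covers m"
  let ?M\<^sub>v = "{T \<in> ?M. v div 2 \<in> T}"
  have inj: "inj_on ?\<Phi> (?M \<times> ?M)" by (rule inj_onI) (auto dest: interleave_inj)
  have "TDV (2 * m) v = card {p \<in> ?M \<times> ?M. v \<in> ?\<Phi> p}"
    unfolding TDV_def gamma_t_sets_cycle_even[OF assms(1)] using inj by (rule card_filter_image)
  also have "{p \<in> ?M \<times> ?M. v \<in> ?\<Phi> p} = (if even v then ?M\<^sub>v \<times> ?M else ?M \<times> ?M\<^sub>v)"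
    by (auto simp: mem_interleave_iff)
  also have "card \<dots> = card ?M\<^sub>v * card ?M" by (simp add: card_cartesian_product)
  finally show ?thesis .
qed

theorem corollary4p2:
  fixes n v :: nat
  assumes "n \<ge> 3" and "v < n"
  shows "TDV n v = (if n mod 4 = 0 then 2
                    else if n mod 4 = 1 \<or> n mod 4 = 3 then n div 2 + 1
                    else (n div 2) * ((n + 2) div 4))"
proof (cases "even n")
  case False
  then have "n mod 4 = 1 \<or> n mod 4 = 3" "(n + 1) div 2 = n div 2 + 1" by presburger+
  then show ?thesis using TDV_cycle_odd[OF False assms(2)] by auto
next
  case True
  then obtain m where n: "n = 2 * m" by blast
  have m: "0 < m" "v div 2 < m" using assms n by auto
  note TDV = TDV_cycle_even[OF m(1), of v, folded n, OF assms(2)]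
  show ?thesis
  proof (cases "even m")
    case True
    then have "n mod 4 = 0" using n by presburger
    then show ?thesis
      using TDV card_min_cycle_covers_mem_even[OF True m(2)] card_min_cycle_covers_even[OF True m(1)]
      by simp
  next
    case False
    then have "n mod 4 = 2" "n div 2 = m" "(n + 2) div 4 = (m + 1) div 2" using n by presburger+
    then show ?thesis
      using TDV card_min_cycle_covers_mem_odd[OF False m(2)] card_min_cycle_covers_odd[OF False]
      by simp
  qed
qed

end
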